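(* Let $x_1,\dots,x_N\in\mathbb R^d$, let $V\in\mathbb R^{d\times d}$ be symmetric positive definite, let $\theta,\hat\theta\in\mathbb R^d$ and $\beta\ge0$ satisfy $\|\hat\theta-\theta\|_V\le\beta$, and let $Q_1,\dots,Q_N\ge0$. Define $h_m=x_m^\top\hat\theta+\beta\|x_m\|_{V^{-1}}$ and $\tilde\mu(n\mid S)=\frac{\exp(h_n)}{1+\sum_{m\in S}\exp(h_m)}$ for $n\in S\subseteq[N]$. Then for every nonempty $S\subseteq[N]$, $$\sum_{n\in S}\big(\tilde\mu(n\mid S)-\mu(n\mid S,\theta)\big)Q_n\le2\beta\max_{n\in S}\big(\|x_n\|_{V^{-1}}\,Q_n\big).$$
   Context: For $S\subseteq[N]$, $\theta\in\mathbb R^d$ and $n\in S$, $\mu(n\mid S,\theta)=\frac{\exp(x_n^\top\theta)}{1+\sum_{m\in S}\exp(x_m^\top\theta)}$. For a positive definite matrix $A$, $\|v\|_A=\sqrt{v^\top Av}$. *)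

theory Defs
  imports "HOL-Analysis.Analysis"
begin

definition wnorm :: "real^'d \<Rightarrow> real^'d^'d \<Rightarrow> real" where
  "wnorm v A = sqrt (v \<bullet> (A *v v))"

definition pos_def :: "real^'d^'d \<Rightarrow> bool" where
  "pos_def A \<longleftrightarrow> transpose A = A \<and> (\<forall>v. v \<noteq> 0 \<longrightarrow> v \<bullet> (A *v v) > 0)"

definition mnl :: "(nat \<Rightarrow> real^'d) \<Rightarrow> nat \<Rightarrow> nat set \<Rightarrow> real^'d \<Rightarrow> real" where
  "mnl x n S \<theta> = exp (x n \<bullet> \<theta>) / (1 + (\<Sum>m\<in>S. exp (x m \<bullet> \<theta>)))"

definition opt_util :: "(nat \<Rightarrow> real^'d) \<Rightarrow> real^'d^'d \<Rightarrow> real^'d \<Rightarrow> real \<Rightarrow> nat \<Rightarrow> real" where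
  "opt_util x V \<theta>h \<beta> m = x m \<bullet> \<theta>h + \<beta> * wnorm (x m) (matrix_inv V)"

definition mnl_opt :: "(nat \<Rightarrow> real^'d) \<Rightarrow> real^'d^'d \<Rightarrow> real^'d \<Rightarrow> real \<Rightarrow> nat \<Rightarrow> nat set \<Rightarrow> real" where
  "mnl_opt x V \<theta>h \<beta> n S =
     exp (opt_util x V \<theta>h \<beta> n) / (1 + (\<Sum>m\<in>S. exp (opt_util x V \<theta>h \<beta> m)))"

end

theory Submission
  imports Defs
begin

text \<open>By Cauchy--Schwarz for the dual pair of norms given by V and its inverse,
  the optimistic utility h_n exceeds the true utility u_n = x_n . theta by a margin between 0 and
  2 beta |x_n|_(V^-1). Raising all utilities only enlarges the MNL denominator, so each term of
  the sum is at most (exp h_n - exp u_n) Q_n / (1 + sum exp h), and exp h - exp u <= exp h (h - u)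
  by convexity. What remains is a combination of the margins with the optimistic probabilities as
  weights, and these add up to less than one.\<close>

lemma pos_def_quadratic_nonneg:
  fixes V :: "real^'d^'d"
  assumes "pos_def V"
  shows "v \<bullet> (V *v v) \<ge> 0"
  using assms unfolding pos_def_def by (cases "v = 0") (auto intro: less_imp_le)

lemma pos_def_inner_commute:
  fixes V :: "real^'d^'d"
  assumes "pos_def V"
  shows "a \<bullet> (V *v b) = b \<bullet> (V *v a)"
proof -
  have "a \<bullet> (V *v b) = (transpose V *v a) \<bullet> b" by (simp add: dot_lmul_matrix)
  also have "\<dots> = b \<bullet> (V *v a)" using assms unfolding pos_def_def by (simp add: inner_commute)
  finally show ?thesis .
qed

lemma matrix_mul_matrix_inv:
  fixes A :: "'a::semiring_1^'n^'n"
  assumes "invertible A"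
  shows "A ** matrix_inv A = mat 1"
proof -
  have "\<exists>A'. A ** A' = mat 1 \<and> A' ** A = mat 1" using assms unfolding invertible_def .
  then have "A ** matrix_inv A = mat 1 \<and> matrix_inv A ** A = mat 1"
    unfolding matrix_inv_def by (rule someI_ex)
  then show ?thesis ..
qed

lemma pos_def_mult_matrix_inv:
  fixes V :: "real^'d^'d"
  assumes "pos_def V"
  shows "V ** matrix_inv V = mat 1"
proof -
  have "inj ((*v) V)"
  proof (rule injI)
    fix a b assume "V *v a = V *v b"
    then have "(a - b) \<bullet> (V *v (a - b)) = 0" by (simp add: matrix_vector_mult_diff_distrib)
    then show "a = b" using assms unfolding pos_def_def by (metis less_irrefl eq_iff_diff_eq_0)
  qed
  then have "invertible V" using invertible_left_inverse matrix_left_invertible_injective by blast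
  then show ?thesis by (rule matrix_mul_matrix_inv)
qed

lemma pos_def_cauchy_schwarz:
  fixes V :: "real^'d^'d"
  assumes "pos_def V"
  shows "(p \<bullet> (V *v z))\<^sup>2 \<le> (p \<bullet> (V *v p)) * (z \<bullet> (V *v z))"
proof (cases "z = 0")
  case True
  then show ?thesis by simp
next
  case False
  define a where "a = z \<bullet> (V *v z)"
  define b where "b = p \<bullet> (V *v z)"
  define c where "c = p \<bullet> (V *v p)"
  have "a > 0" using False assms unfolding a_def pos_def_def by blast
  define q where "q = p - (b / a) *\<^sub>R z"
  have "q \<bullet> (V *v q) = c - b\<^sup>2 / a"
    using pos_def_inner_commute[OF assms, of z p] \<open>a > 0\<close>
    by (simp add: q_def a_def b_def c_def matrix_vector_mult_diff_distrib matrix_vector_mult_scaleR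
        inner_diff_left inner_diff_right power2_eq_square field_simps)
  then have "0 \<le> c - b\<^sup>2 / a" using pos_def_quadratic_nonneg[OF assms, of q] by simp
  with \<open>a > 0\<close> show ?thesis by (simp add: a_def b_def c_def field_simps)
qed

lemma pos_def_matrix_inv_quadratic_nonneg:
  fixes V :: "real^'d^'d"
  assumes "pos_def V"
  shows "y \<bullet> (matrix_inv V *v y) \<ge> 0"
proof -
  define p where "p = matrix_inv V *v y"
  have "V *v p = y" unfolding p_def by (simp add: matrix_vector_mul_assoc pos_def_mult_matrix_inv[OF assms])
  then show ?thesis using pos_def_quadratic_nonneg[OF assms, of p] by (simp add: p_def inner_commute)
qed

lemma abs_inner_le_wnorm_dual:
  fixes V :: "real^'d^'d"
  assumes "pos_def V"
  shows "\<bar>y \<bullet> z\<bar> \<le> wnorm y (matrix_inv V) * wnorm z V"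
proof -
  define p where "p = matrix_inv V *v y"
  have Vp: "V *v p = y" unfolding p_def by (simp add: matrix_vector_mul_assoc pos_def_mult_matrix_inv[OF assms])
  have "p \<bullet> (V *v z) = y \<bullet> z" using pos_def_inner_commute[OF assms, of p z] Vp by (simp add: inner_commute)
  moreover have "p \<bullet> (V *v p) = y \<bullet> (matrix_inv V *v y)" using Vp p_def by (simp add: inner_commute)
  ultimately have "(y \<bullet> z)\<^sup>2 \<le> (y \<bullet> (matrix_inv V *v y)) * (z \<bullet> (V *v z))"
    using pos_def_cauchy_schwarz[OF assms, of p z] by simp
  then have "sqrt ((y \<bullet> z)\<^sup>2) \<le> sqrt ((y \<bullet> (matrix_inv V *v y)) * (z \<bullet> (V *v z)))"
    by (rule real_sqrt_le_mono)
  then show ?thesis unfolding wnorm_def by (simp add: real_sqrt_mult)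
qed

lemma abs_inner_le_of_wnorm_le:
  fixes V :: "real^'d^'d"
  assumes "pos_def V" and "wnorm z V \<le> \<beta>"
  shows "\<bar>y \<bullet> z\<bar> \<le> \<beta> * wnorm y (matrix_inv V)"
proof -
  have "0 \<le> wnorm y (matrix_inv V)"
    using pos_def_matrix_inv_quadratic_nonneg[OF assms(1)] by (simp add: wnorm_def)
  then have "wnorm y (matrix_inv V) * wnorm z V \<le> wnorm y (matrix_inv V) * \<beta>"
    using assms(2) by (simp add: mult_left_mono)
  then show ?thesis using abs_inner_le_wnorm_dual[OF assms(1), of y z] by (simp add: mult.commute)
qed

lemma exp_diff_le_exp_mult: "exp a - exp b \<le> exp a * (a - b :: real)"
proof -
  have "1 + (b - a) \<le> exp (b - a)" using exp_ge_add_one_self by simp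
  then show ?thesis by (simp add: exp_diff field_simps)
qed

definition mnl_prob :: "(nat \<Rightarrow> real) \<Rightarrow> nat \<Rightarrow> nat set \<Rightarrow> real" where
  "mnl_prob u n S = exp (u n) / (1 + (\<Sum>m\<in>S. exp (u m)))"

lemma mnl_prob_sum_le_one:
  assumes "finite S"
  shows "(\<Sum>n\<in>S. mnl_prob u n S) \<le> 1"
proof -
  have "(\<Sum>n\<in>S. mnl_prob u n S) = (\<Sum>m\<in>S. exp (u m)) / (1 + (\<Sum>m\<in>S. exp (u m)))"
    by (simp add: mnl_prob_def sum_divide_distrib)
  also have "\<dots> \<le> 1" by (simp add: sum_nonneg divide_le_eq_1 add_pos_nonneg)
  finally show ?thesis .
qed

lemma mnl_prob_diff_le:
  assumes "\<forall>m\<in>S. u m \<le> h m" and "n \<in> S" and "finite S"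
  shows "mnl_prob h n S - mnl_prob u n S \<le> mnl_prob h n S * (h n - u n)"
proof -
  define A where "A = (\<Sum>m\<in>S. exp (u m))"
  define B where "B = (\<Sum>m\<in>S. exp (h m))"
  have "0 \<le> A" "A \<le> B" unfolding A_def B_def using assms(1) by (auto intro: sum_nonneg sum_mono)
  then have "exp (u n) / (1 + B) \<le> exp (u n) / (1 + A)" by (intro divide_left_mono) auto
  then have "mnl_prob h n S - mnl_prob u n S \<le> (exp (h n) - exp (u n)) / (1 + B)"
    by (simp add: mnl_prob_def A_def B_def diff_divide_distrib)
  also have "\<dots> \<le> exp (h n) * (h n - u n) / (1 + B)"
    using \<open>0 \<le> A\<close> \<open>A \<le> B\<close> exp_diff_le_exp_mult by (intro divide_right_mono) auto
  finally show ?thesis by (simp add: mnl_prob_def B_def)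
qed

lemma mnl_prob_weighted_gap_le_Max:
  assumes "finite S" and "S \<noteq> {}"
    and "\<forall>n\<in>S. Q n \<ge> 0" and "\<forall>n\<in>S. u n \<le> h n" and "\<forall>n\<in>S. h n - u n \<le> \<delta> n"
  shows "(\<Sum>n\<in>S. (mnl_prob h n S - mnl_prob u n S) * Q n) \<le> Max ((\<lambda>n. \<delta> n * Q n) ` S)"
proof -
  define M where "M = Max ((\<lambda>n. \<delta> n * Q n) ` S)"
  have gap_le_M: "(h n - u n) * Q n \<le> M" if "n \<in> S" for n
  proof -
    have "(h n - u n) * Q n \<le> \<delta> n * Q n" using assms(3,5) that by (simp add: mult_right_mono)
    also have "\<dots> \<le> M" unfolding M_def using assms(1) that by simp
    finally show ?thesis .
  qed
  obtain n0 where "n0 \<in> S" using assms(2) by blast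
  then have "0 \<le> M" using gap_le_M[of n0] assms(3,4) by (meson diff_ge_0_iff_ge order_trans zero_le_mult_iff)
  have "(\<Sum>n\<in>S. (mnl_prob h n S - mnl_prob u n S) * Q n)
      \<le> (\<Sum>n\<in>S. mnl_prob h n S * ((h n - u n) * Q n))"
    using mnl_prob_diff_le[OF assms(4) _ assms(1)] assms(3)
    by (intro sum_mono) (simp add: mult.assoc[symmetric] mult_right_mono)
  also have "\<dots> \<le> (\<Sum>n\<in>S. mnl_prob h n S * M)"
    using gap_le_M by (intro sum_mono mult_left_mono) (auto simp: mnl_prob_def intro!: divide_nonneg_pos add_pos_nonneg sum_nonneg)
  also have "\<dots> \<le> M"
    using mult_right_mono[OF mnl_prob_sum_le_one[OF assms(1)] \<open>0 \<le> M\<close>]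
    by (simp add: sum_distrib_right)
  finally show ?thesis unfolding M_def .
qed

theorem mainTheorem7:
  fixes N :: nat and x :: "nat \<Rightarrow> real^'d" and V :: "real^'d^'d"
    and \<theta> \<theta>h :: "real^'d" and \<beta> :: real and Q :: "nat \<Rightarrow> real"
    and S :: "nat set"
  assumes "pos_def V"
    and "\<beta> \<ge> 0"
    and "wnorm (\<theta>h - \<theta>) V \<le> \<beta>"
    and "\<forall>n\<in>{1..N}. Q n \<ge> 0"
    and "S \<subseteq> {1..N}" and "S \<noteq> {}"
  shows "(\<Sum>n\<in>S. (mnl_opt x V \<theta>h \<beta> n S - mnl x n S \<theta>) * Q n)
           \<le> 2 * \<beta> * Max ((\<lambda>n. wnorm (x n) (matrix_inv V) * Q n) ` S)"
proof -
  define w where "w n = wnorm (x n) (matrix_inv V)" for n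
  define u where "u n = x n \<bullet> \<theta>" for n
  have dev: "\<bar>x n \<bullet> (\<theta>h - \<theta>)\<bar> \<le> \<beta> * w n" for n
    unfolding w_def by (rule abs_inner_le_of_wnorm_le[OF assms(1,3)])
  have "u n \<le> opt_util x V \<theta>h \<beta> n \<and> opt_util x V \<theta>h \<beta> n - u n \<le> 2 * \<beta> * w n" for n
    using dev[of n] unfolding opt_util_def u_def w_def by (simp add: inner_diff_right abs_le_iff)
  moreover have "finite S" using assms(5) finite_subset by blast
  ultimately have "(\<Sum>n\<in>S. (mnl_opt x V \<theta>h \<beta> n S - mnl x n S \<theta>) * Q n)
      \<le> Max ((\<lambda>n. 2 * \<beta> * w n * Q n) ` S)"
    using mnl_prob_weighted_gap_le_Max[of S Q u "opt_util x V \<theta>h \<beta>" "\<lambda>n. 2 * \<beta> * w n"] assms(4-6)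
    by (auto simp: mnl_prob_def mnl_opt_def mnl_def u_def)
  also have "\<dots> = 2 * \<beta> * Max ((\<lambda>n. w n * Q n) ` S)"
    using mono_Max_commute[of "(*) (2 * \<beta>)" "(\<lambda>n. w n * Q n) ` S"] \<open>finite S\<close> assms(2,6)
    by (simp add: mono_def mult_left_mono image_image mult.assoc)
  finally show ?thesis unfolding w_def .
qed

end
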